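(* For every $i\in[d]$, all $x$ with $\|x\|_2\le1$ and every time step $t\ge1$, with probability at least $1-\frac1{c_1}-\exp\!\left(-\frac{32(c_4-1)^2\eta^2m^2\bar\Lambda^2t^2}{\pi}\right)$ over the random initialization, for constants $c_1>10$ and $c_4\ge1$, $$\big|\tilde L_i(\nabla f^{(t)},x)-\tilde L_i(\nabla g^{(t)},x)\big|\le3\delta_t,\qquad \delta_t=\frac{192\eta^2m^{1.5}\bar\Lambda^2c_1c_4\epsilon_at^2\sqrt{\log m}}{\sqrt\pi},\quad\bar\Lambda=6c_1\epsilon_a\sqrt{2\log m}.$$
   Context: UNF setting. Fix $d\ge1$, $m\ge2$, $\epsilon_a>0$, $Q\ge1$, learning rate $\eta>0$. For $\|x_{1:i}\|_2\le1$, $\hat x_{1:i}=(x_1,\dots,x_i,\sqrt{1-\|x_{1:i}\|_2^2})$. $\sigma(u)=\max\{u,0\}$, $\sigma'(u)=\mathbf 1\{u\ge0\}$; $\phi(u)=e^u$ ($u<0$), $u+1$ ($u\ge0$). Frozen random initial parameters $a_{i,r}\sim\mathcal N(0,\epsilon_a^2)$, $\bar w_{i,r}\sim\mathcal N(0,\frac1mI_{i+1})$, $\bar b_{i,r}\sim\mathcal N(0,\frac1m)$, independent. Offsets $\theta_i=(w_{i,r},b_{i,r})_r$. Network $N(x_{1:i};\theta_i)=\sum_ra_{i,r}\sigma(\langle\bar w_{i,r}+w_{i,r},\hat x_{1:i}\rangle+\bar b_{i,r}+b_{i,r})$; pseudo-network $P(x_{1:i};\theta_i)=\sum_ra_{i,r}\sigma'(\langle\bar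 w_{i,r},\hat x_{1:i}\rangle+\bar b_{i,r})(\langle\bar w_{i,r}+w_{i,r},\hat x_{1:i}\rangle+\bar b_{i,r}+b_{i,r})$. With $\Delta_{x_i}=(x_i+1)/Q$ and $q^{(j)}_i=(x_1,\dots,x_{i-1},-1+j\Delta_{x_i})$, define for a model $h\in\{N,P\}$ with offsets $\theta_i$ the per-coordinate approximate loss $\sum_{j=1}^Q\Delta_{x_i}\phi(h(q^{(j)}_i;\theta_i))-\log\phi(h(x_{1:i};\theta_i))$; $\tilde L_i(\nabla f^{(t)},x)$ is this quantity for $h=N$ and $\tilde L_i(\nabla g^{(t)},x)$ for $h=P$, both with $\theta_i=\theta_i^{(t)}$. $\theta^{(t)}$ are SGD iterates on the network loss $\tilde L=\sum_i\tilde L_i$ (with $h=N$): $\theta^{(0)}=0$, $\theta^{(t+1)}=\theta^{(t)}-\eta\nabla_\theta\tilde L(\nabla f^{(t)},x^{(t)})$, $x^{(t)}$ uniform from a training set in the unit ball. *)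

theory Defs
  imports "HOL-Probability.Probability"
begin

definition relu :: "real \<Rightarrow> real" where "relu u = max u 0"
definition relu' :: "real \<Rightarrow> real" where "relu' u = (if u \<ge> 0 then 1 else 0)"
definition phi :: "real \<Rightarrow> real" where "phi u = (if u < 0 then exp u else u + 1)"
definition phi' :: "real \<Rightarrow> real" where "phi' u = (if u < 0 then exp u else 1)"

text \<open>Points of R^d are functions nat => real, coordinates 1..d.
  xhat i x has coordinates 1..i+1.\<close>
definition xhat :: "nat \<Rightarrow> (nat \<Rightarrow> real) \<Rightarrow> nat \<Rightarrow> real" where
  "xhat i x k = (if k \<le> i then x k else sqrt (1 - (\<Sum>l=1..i. (x l)\<^sup>2)))"

definition Delta :: "nat \<Rightarrow> nat \<Rightarrow> (nat \<Rightarrow> real) \<Rightarrow> real" where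
  "Delta Q i x = (x i + 1) / real Q"

definition qpt :: "nat \<Rightarrow> nat \<Rightarrow> nat \<Rightarrow> (nat \<Rightarrow> real) \<Rightarrow> (nat \<Rightarrow> real)" where
  "qpt Q j i x = x(i := -1 + real j * Delta Q i x)"

datatype pidx = Aidx nat nat | Widx nat nat nat | Bidx nat nat

definition init_index :: "nat \<Rightarrow> nat \<Rightarrow> pidx set" where
  "init_index d m =
     {Aidx i r | i r. i \<in> {1..d} \<and> r \<in> {1..m}}
   \<union> {Widx i r k | i r k. i \<in> {1..d} \<and> r \<in> {1..m} \<and> k \<in> {1..i+1}}
   \<union> {Bidx i r | i r. i \<in> {1..d} \<and> r \<in> {1..m}}"

definition gauss :: "real \<Rightarrow> real measure" where
  "gauss s = density lborel (normal_density 0 s)"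

definition init_dist :: "nat \<Rightarrow> real \<Rightarrow> pidx \<Rightarrow> real measure" where
  "init_dist m eps_a p = (case p of Aidx _ _ \<Rightarrow> gauss eps_a
                                 | Widx _ _ _ \<Rightarrow> gauss (1 / sqrt (real m))
                                 | Bidx _ _ \<Rightarrow> gauss (1 / sqrt (real m)))"

definition init_measure :: "nat \<Rightarrow> nat \<Rightarrow> real \<Rightarrow> (pidx \<Rightarrow> real) measure" where
  "init_measure d m eps_a = PiM (init_index d m) (init_dist m eps_a)"

text \<open>Offsets theta = (w, b) with w i r k and b i r.\<close>
type_synonym params = "(nat \<Rightarrow> nat \<Rightarrow> nat \<Rightarrow> real) \<times> (nat \<Rightarrow> nat \<Rightarrow> real)"

definition zero_params :: params where "zero_params = (\<lambda>_ _ _. 0, \<lambda>_ _. 0)"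

definition preact :: "(pidx \<Rightarrow> real) \<Rightarrow> params \<Rightarrow> nat \<Rightarrow> nat \<Rightarrow> (nat \<Rightarrow> real) \<Rightarrow> real" where
  "preact \<omega> th i r z =
     (\<Sum>k=1..i+1. (\<omega> (Widx i r k) + fst th i r k) * xhat i z k) + \<omega> (Bidx i r) + snd th i r"

definition Net :: "nat \<Rightarrow> (pidx \<Rightarrow> real) \<Rightarrow> params \<Rightarrow> nat \<Rightarrow> (nat \<Rightarrow> real) \<Rightarrow> real" where
  "Net m \<omega> th i z = (\<Sum>r=1..m. \<omega> (Aidx i r) * relu (preact \<omega> th i r z))"

definition Pseudo :: "nat \<Rightarrow> (pidx \<Rightarrow> real) \<Rightarrow> params \<Rightarrow> nat \<Rightarrow> (nat \<Rightarrow> real) \<Rightarrow> real" where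
  "Pseudo m \<omega> th i z =
     (\<Sum>r=1..m. \<omega> (Aidx i r) * relu' (preact \<omega> zero_params i r z) * preact \<omega> th i r z)"

definition Lapprox :: "nat \<Rightarrow> ((nat \<Rightarrow> real) \<Rightarrow> real) \<Rightarrow> nat \<Rightarrow> (nat \<Rightarrow> real) \<Rightarrow> real" where
  "Lapprox Q h i x =
     (\<Sum>j=1..Q. Delta Q i x * phi (h (qpt Q j i x))) - ln (phi (h x))"

definition gradN_w :: "(pidx \<Rightarrow> real) \<Rightarrow> params \<Rightarrow> nat \<Rightarrow> nat \<Rightarrow> nat \<Rightarrow> (nat \<Rightarrow> real) \<Rightarrow> real" where
  "gradN_w \<omega> th i r k z = \<omega> (Aidx i r) * relu' (preact \<omega> th i r z) * xhat i z k"

definition gradN_b :: "(pidx \<Rightarrow> real) \<Rightarrow> params \<Rightarrow> nat \<Rightarrow> nat \<Rightarrow> (nat \<Rightarrow> real) \<Rightarrow> real" where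
  "gradN_b \<omega> th i r z = \<omega> (Aidx i r) * relu' (preact \<omega> th i r z)"

text \<open>Chain rule for the loss: sum_j Delta phi'(N q_j) grad N(q_j) - phi'(N x)/phi(N x) grad N(x).
  Since theta_i only enters L_i, grad of L = sum_i L_i w.r.t. theta_i is grad of L_i.\<close>
definition gradL_w :: "nat \<Rightarrow> nat \<Rightarrow> (pidx \<Rightarrow> real) \<Rightarrow> params \<Rightarrow> (nat \<Rightarrow> real) \<Rightarrow> nat \<Rightarrow> nat \<Rightarrow> nat \<Rightarrow> real" where
  "gradL_w m Q \<omega> th x i r k =
     (\<Sum>j=1..Q. Delta Q i x * phi' (Net m \<omega> th i (qpt Q j i x)) * gradN_w \<omega> th i r k (qpt Q j i x))
     - phi' (Net m \<omega> th i x) / phi (Net m \<omega> th i x) * gradN_w \<omega> th i r k x"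

definition gradL_b :: "nat \<Rightarrow> nat \<Rightarrow> (pidx \<Rightarrow> real) \<Rightarrow> params \<Rightarrow> (nat \<Rightarrow> real) \<Rightarrow> nat \<Rightarrow> nat \<Rightarrow> real" where
  "gradL_b m Q \<omega> th x i r =
     (\<Sum>j=1..Q. Delta Q i x * phi' (Net m \<omega> th i (qpt Q j i x)) * gradN_b \<omega> th i r (qpt Q j i x))
     - phi' (Net m \<omega> th i x) / phi (Net m \<omega> th i x) * gradN_b \<omega> th i r x"

primrec sgd :: "nat \<Rightarrow> nat \<Rightarrow> real \<Rightarrow> (pidx \<Rightarrow> real) \<Rightarrow> (nat \<Rightarrow> nat \<Rightarrow> real) \<Rightarrow> nat \<Rightarrow> params" where
  "sgd m Q eta \<omega> xs 0 = zero_params"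
| "sgd m Q eta \<omega> xs (Suc t) =
     (let th = sgd m Q eta \<omega> xs t in
       (\<lambda>i r k. fst th i r k - eta * gradL_w m Q \<omega> th (xs t) i r k,
        \<lambda>i r. snd th i r - eta * gradL_b m Q \<omega> th (xs t) i r))"

end

theory Submission
  imports Defs
begin

text \<open>Along SGD each preactivation moves away from its initial value by at most
  \<open>12 \<eta> t \<bar>a\<^sub>r\<bar>\<close>: the loss gradients are bounded because \<open>\<phi>'\<close>, \<open>\<phi>'/\<phi>\<close> and \<open>\<sigma>'\<close> take values
  in \<open>[0,1]\<close> and the lifted inputs have norm at most \<open>\<surd>3\<close>. Hence the network and its
  pseudo-network differ only through neurons whose initial preactivation lies within that
  drift of the kink of the ReLU, and since \<open>\<phi>\<close> and \<open>log \<phi>\<close> are 1-Lipschitz the loss gap is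
  dominated by a random variable depending on the initialization alone. Conditionally on the
  other weights the initial bias is Gaussian with density at most \<open>\<surd>m/\<surd>(2\<pi>)\<close>, so each
  neuron contributes \<open>O(\<eta>\<^sup>2 t\<^sup>2 \<surd>m \<epsilon>\<^sub>a\<^sup>3)\<close> in expectation, and Markov's inequality yields the
  bound.\<close>

section \<open>Lifted inputs and query points\<close>

definition sqnorm :: "nat \<Rightarrow> (nat \<Rightarrow> real) \<Rightarrow> real" where
  "sqnorm n x = (\<Sum>k=1..n. (x k)\<^sup>2)"

lemma sqnorm_mono: "n \<le> d \<Longrightarrow> sqnorm n x \<le> sqnorm d x"
  unfolding sqnorm_def by (intro sum_mono2) auto

lemma abs_coord_le_1:
  assumes "sqnorm d x \<le> 1" "k \<in> {1..d}"
  shows "\<bar>x k\<bar> \<le> 1"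
proof -
  have "(x k)\<^sup>2 \<le> sqnorm d x"
    unfolding sqnorm_def using assms(2) by (intro member_le_sum) auto
  with assms(1) show ?thesis
    by (simp flip: abs_square_le_1)
qed

lemma sqnorm_fun_upd_last:
  "1 \<le> i \<Longrightarrow> sqnorm i (x(i := v)) = sqnorm (i - 1) x + v\<^sup>2"
  unfolding sqnorm_def by (cases i) (auto intro!: sum.cong)

lemma sqnorm_xhat: "sqnorm (Suc i) (xhat i p) = sqnorm i p + \<bar>1 - sqnorm i p\<bar>"
proof -
  have "(sqrt y)\<^sup>2 = \<bar>y\<bar>" for y :: real
    by (metis real_sqrt_abs2 real_sqrt_pow2 abs_ge_zero real_sqrt_abs real_sqrt_power)
  then show ?thesis
    unfolding sqnorm_def by (simp add: xhat_def)
qed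

definition xhat_inner :: "nat \<Rightarrow> (nat \<Rightarrow> real) \<Rightarrow> (nat \<Rightarrow> real) \<Rightarrow> real" where
  "xhat_inner i u v = (\<Sum>k=1..i+1. xhat i u k * xhat i v k)"

lemma abs_xhat_inner_le:
  assumes "sqnorm i u \<le> 2" "sqnorm i v \<le> 2"
  shows "\<bar>xhat_inner i u v\<bar> \<le> 3"
proof -
  have bound: "sqnorm (Suc i) (xhat i p) \<le> 3" if "sqnorm i p \<le> 2" for p
    using that by (simp add: sqnorm_xhat abs_if)
  have "(xhat_inner i u v)\<^sup>2 \<le> sqnorm (Suc i) (xhat i u) * sqnorm (Suc i) (xhat i v)"
    unfolding xhat_inner_def sqnorm_def Suc_eq_plus1 by (rule Cauchy_Schwarz_ineq_sum)
  also have "\<dots> \<le> 3 * 3"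
    using bound assms by (intro mult_mono) (auto simp: sqnorm_def sum_nonneg)
  finally show ?thesis
    using abs_le_square_iff[of _ 3] by fastforce
qed

lemma Delta_nonneg: "\<bar>x i\<bar> \<le> 1 \<Longrightarrow> 0 \<le> Delta Q i x"
  unfolding Delta_def by simp

lemma sum_Delta_le: "\<bar>x i\<bar> \<le> 1 \<Longrightarrow> (\<Sum>j=1..Q. Delta Q i x) \<le> 2"
  unfolding Delta_def by (cases "Q = 0") auto

lemma abs_sum_Delta_le:
  assumes "\<bar>x i\<bar> \<le> 1" "0 \<le> B" "\<And>j. j \<in> {1..Q} \<Longrightarrow> \<bar>f j\<bar> \<le> B"
  shows "\<bar>\<Sum>j=1..Q. Delta Q i x * f j\<bar> \<le> 2 * B"
proof -
  have Delta: "0 \<le> Delta Q i x"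
    using assms(1) by (rule Delta_nonneg)
  have "\<bar>\<Sum>j=1..Q. Delta Q i x * f j\<bar> \<le> (\<Sum>j=1..Q. Delta Q i x * B)"
    using Delta assms(3) by (intro order_trans[OF sum_abs sum_mono]) (simp add: abs_mult mult_left_mono)
  also have "\<dots> = (\<Sum>j=1..Q. Delta Q i x) * B"
    by (simp add: sum_distrib_right)
  also have "\<dots> \<le> 2 * B"
    using sum_Delta_le[where x = x, OF assms(1)] assms(2) by (intro mult_right_mono)
  finally show ?thesis .
qed

lemma sqnorm_qpt_le:
  assumes "sqnorm d x \<le> 1" "i \<in> {1..d}" "j \<le> Q"
  shows "sqnorm i (qpt Q j i x) \<le> 2"
proof -
  have xi: "\<bar>x i\<bar> \<le> 1"
    using assms(1,2) by (rule abs_coord_le_1)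
  have jQ: "0 \<le> real j / real Q" "real j / real Q \<le> 1"
    using assms(3) by (auto simp: divide_le_eq_1)
  have "real j / real Q * (x i + 1) \<le> 1 * 2"
    using jQ xi by (intro mult_mono) auto
  moreover have "0 \<le> real j / real Q * (x i + 1)"
    using jQ xi by simp
  ultimately have "\<bar>-1 + real j * Delta Q i x\<bar> \<le> 1"
    unfolding Delta_def by simp
  then have "(-1 + real j * Delta Q i x)\<^sup>2 \<le> 1"
    by (simp add: abs_square_le_1)
  moreover have "sqnorm (i - 1) x \<le> sqnorm d x"
    using assms(2) by (intro sqnorm_mono) auto
  ultimately show ?thesis
    using assms(1,2) by (simp add: qpt_def sqnorm_fun_upd_last)
qed

section \<open>The activation functions\<close>

lemma abs_diff_le_of_mono_contraction:
  fixes f :: "real \<Rightarrow> real"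
  assumes "\<And>u v. u \<le> v \<Longrightarrow> f u \<le> f v \<and> f v - f u \<le> v - u"
  shows "\<bar>f u - f v\<bar> \<le> \<bar>u - v\<bar>"
  using assms[of u v] assms[of v u] by (cases "u \<le> v") auto

lemma phi_pos: "0 < phi u"
  unfolding phi_def by auto

lemma phi_mono_contraction:
  assumes "u \<le> v"
  shows "phi u \<le> phi v \<and> phi v - phi u \<le> v - u"
proof (cases "v < 0")
  case True
  have "1 - exp (u - v) \<le> v - u"
    using exp_ge_add_one_self[of "u - v"] by linarith
  have "exp v - exp u = exp v * (1 - exp (u - v))"
    by (simp add: algebra_simps exp_diff)
  also have "\<dots> \<le> 1 * (v - u)"
    by (intro mult_mono) (use True assms \<open>1 - exp (u - v) \<le> v - u\<close> in auto)
  finally show ?thesis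
    using True assms unfolding phi_def by simp
next
  case v: False
  show ?thesis
  proof (cases "u < 0")
    case True
    then have "exp u \<le> 1" "phi u = exp u" "phi v = v + 1"
      using v unfolding phi_def by auto
    then show ?thesis
      using True v exp_ge_add_one_self[of u] by linarith
  qed (use v assms in \<open>auto simp: phi_def\<close>)
qed

lemma ln_phi_mono_contraction:
  assumes "u \<le> v"
  shows "ln (phi u) \<le> ln (phi v) \<and> ln (phi v) - ln (phi u) \<le> v - u"
proof -
  have "ln (phi v) - ln (phi u) \<le> v - u"
  proof (cases "u < 0")
    case True
    then show ?thesis
      using assms ln_le_minus_one[of "v + 1"] unfolding phi_def by auto
  next
    case False
    have "ln (v + 1) - ln (u + 1) = ln ((v + 1) / (u + 1))"
      using False assms by (simp add: ln_div)
    also have "\<dots> \<le> (v + 1) / (u + 1) - 1"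
      using False assms by (intro ln_le_minus_one) auto
    also have "\<dots> = (v - u) / (u + 1)"
      using False by (simp add: field_simps)
    also have "\<dots> \<le> (v - u) / 1"
      using False assms by (intro divide_left_mono) auto
    finally show ?thesis
      using False assms unfolding phi_def by simp
  qed
  then show ?thesis
    using phi_mono_contraction[OF assms] phi_pos[of u] by simp
qed

lemma abs_phi_diff_le: "\<bar>phi u - phi v\<bar> \<le> \<bar>u - v\<bar>"
  by (rule abs_diff_le_of_mono_contraction) (rule phi_mono_contraction)

lemma abs_ln_phi_diff_le: "\<bar>ln (phi u) - ln (phi v)\<bar> \<le> \<bar>u - v\<bar>"
  by (rule abs_diff_le_of_mono_contraction[where f = "\<lambda>u. ln (phi u)"]) (rule ln_phi_mono_contraction)

lemma phi'_bounds: "0 \<le> phi' u" "phi' u \<le> 1"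
  unfolding phi'_def by auto

lemma phi'_div_phi_bounds: "0 \<le> phi' u / phi u" "phi' u / phi u \<le> 1"
  unfolding phi'_def phi_def by auto

lemma relu'_bounds: "0 \<le> relu' u" "relu' u \<le> 1"
  unfolding relu'_def by auto

lemma abs_relu_linearization_le:
  assumes "\<bar>y - z\<bar> \<le> B"
  shows "\<bar>relu y - relu' z * y\<bar> \<le> (if \<bar>z\<bar> \<le> B then B else 0)"
  using assms unfolding relu_def relu'_def by auto

section \<open>Drift of the preactivations along SGD\<close>

definition preact_grad ::
    "nat \<Rightarrow> nat \<Rightarrow> (pidx \<Rightarrow> real) \<Rightarrow> params \<Rightarrow> (nat \<Rightarrow> real) \<Rightarrow> nat \<Rightarrow> nat \<Rightarrow> (nat \<Rightarrow> real) \<Rightarrow> real" where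
  "preact_grad m Q \<omega> th x0 i r p =
     (\<Sum>k=1..i+1. gradL_w m Q \<omega> th x0 i r k * xhat i p k) + gradL_b m Q \<omega> th x0 i r"

lemma preact_sgd_Suc:
  "preact \<omega> (sgd m Q eta \<omega> xs (Suc t)) i r p =
     preact \<omega> (sgd m Q eta \<omega> xs t) i r p - eta * preact_grad m Q \<omega> (sgd m Q eta \<omega> xs t) (xs t) i r p"
  unfolding sgd.simps Let_def preact_def preact_grad_def
  by (simp add: algebra_simps sum.distrib sum_subtractf sum_distrib_left)

lemma gradN_pair_eq:
  "(\<Sum>k=1..i+1. gradN_w \<omega> th i r k z * xhat i p k) + gradN_b \<omega> th i r z =
     \<omega> (Aidx i r) * relu' (preact \<omega> th i r z) * (xhat_inner i z p + 1)"
  unfolding gradN_w_def gradN_b_def xhat_inner_def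
  by (simp add: sum_distrib_left algebra_simps)

lemma preact_grad_eq:
  fixes \<omega> :: "pidx \<Rightarrow> real" and th :: params and i r :: nat and p :: "nat \<Rightarrow> real"
  defines "g z \<equiv> \<omega> (Aidx i r) * relu' (preact \<omega> th i r z) * (xhat_inner i z p + 1)"
  shows "preact_grad m Q \<omega> th x0 i r p =
     (\<Sum>j=1..Q. Delta Q i x0 * (phi' (Net m \<omega> th i (qpt Q j i x0)) * g (qpt Q j i x0)))
     - phi' (Net m \<omega> th i x0) / phi (Net m \<omega> th i x0) * g x0"
proof -
  define c where "c j = Delta Q i x0 * phi' (Net m \<omega> th i (qpt Q j i x0))" for j
  define c0 where "c0 = phi' (Net m \<omega> th i x0) / phi (Net m \<omega> th i x0)"
  have pair: "(\<Sum>k=1..i+1. gradN_w \<omega> th i r k z * xhat i p k) + gradN_b \<omega> th i r z = g z" for z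
    unfolding g_def by (rule gradN_pair_eq)
  have w: "gradL_w m Q \<omega> th x0 i r k =
      (\<Sum>j=1..Q. c j * gradN_w \<omega> th i r k (qpt Q j i x0)) - c0 * gradN_w \<omega> th i r k x0" for k
    unfolding gradL_w_def c_def c0_def by (simp add: mult.assoc)
  have b: "gradL_b m Q \<omega> th x0 i r =
      (\<Sum>j=1..Q. c j * gradN_b \<omega> th i r (qpt Q j i x0)) - c0 * gradN_b \<omega> th i r x0"
    unfolding gradL_b_def c_def c0_def by (simp add: mult.assoc)
  have "(\<Sum>k=1..i+1. (\<Sum>j=1..Q. c j * gradN_w \<omega> th i r k (qpt Q j i x0)) * xhat i p k) =
      (\<Sum>j=1..Q. c j * (\<Sum>k=1..i+1. gradN_w \<omega> th i r k (qpt Q j i x0) * xhat i p k))"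
    unfolding sum_distrib_left sum_distrib_right mult.assoc by (rule sum.swap)
  then have "preact_grad m Q \<omega> th x0 i r p =
      (\<Sum>j=1..Q. c j * ((\<Sum>k=1..i+1. gradN_w \<omega> th i r k (qpt Q j i x0) * xhat i p k)
                          + gradN_b \<omega> th i r (qpt Q j i x0)))
      - c0 * ((\<Sum>k=1..i+1. gradN_w \<omega> th i r k x0 * xhat i p k) + gradN_b \<omega> th i r x0)"
    unfolding preact_grad_def w b
    by (simp add: left_diff_distrib sum_subtractf sum.distrib sum_distrib_left distrib_left
        mult.assoc)
  then show ?thesis
    unfolding pair c_def c0_def by (simp add: mult.assoc)
qed

lemma abs_unit_weighted_le:
  fixes f g a v V :: real
  assumes "0 \<le> f" "f \<le> 1" "0 \<le> g" "g \<le> 1" "\<bar>v\<bar> \<le> V"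
  shows "\<bar>f * (a * g * v)\<bar> \<le> V * \<bar>a\<bar>"
proof -
  have "\<bar>f * (a * g * v)\<bar> = (f * g) * (\<bar>v\<bar> * \<bar>a\<bar>)"
    using assms by (simp add: abs_mult)
  also have "\<dots> \<le> 1 * (V * \<bar>a\<bar>)"
    using assms by (intro mult_mono mult_right_mono mult_le_one) auto
  finally show ?thesis
    by simp
qed

lemma abs_preact_grad_le:
  assumes "sqnorm d x0 \<le> 1" "i \<in> {1..d}" "sqnorm i p \<le> 2"
  shows "\<bar>preact_grad m Q \<omega> th x0 i r p\<bar> \<le> 12 * \<bar>\<omega> (Aidx i r)\<bar>"
proof -
  let ?a = "\<omega> (Aidx i r)"
  let ?g = "\<lambda>z. ?a * relu' (preact \<omega> th i r z) * (xhat_inner i z p + 1)"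
  have x0i: "\<bar>x0 i\<bar> \<le> 1"
    using assms(1,2) by (rule abs_coord_le_1)
  have term_le: "\<bar>f * ?g z\<bar> \<le> 4 * \<bar>?a\<bar>" if "0 \<le> f" "f \<le> 1" "sqnorm i z \<le> 2" for f z
  proof -
    have "\<bar>xhat_inner i z p + 1\<bar> \<le> 4"
      using abs_xhat_inner_le[OF that(3) assms(3)] by linarith
    then show ?thesis
      using that relu'_bounds by (intro abs_unit_weighted_le) auto
  qed
  have queries: "\<bar>\<Sum>j=1..Q. Delta Q i x0 * (phi' (Net m \<omega> th i (qpt Q j i x0)) * ?g (qpt Q j i x0))\<bar>
      \<le> 2 * (4 * \<bar>?a\<bar>)"
    using assms phi'_bounds by (intro abs_sum_Delta_le[where x = x0, OF x0i] term_le sqnorm_qpt_le) auto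
  have "sqnorm i x0 \<le> sqnorm d x0"
    using assms(2) by (intro sqnorm_mono) auto
  then have sample: "\<bar>phi' (Net m \<omega> th i x0) / phi (Net m \<omega> th i x0) * ?g x0\<bar> \<le> 4 * \<bar>?a\<bar>"
    using assms(1) phi'_div_phi_bounds by (intro term_le) auto
  show ?thesis
    unfolding preact_grad_eq using queries sample abs_triangle_ineq4 by (smt (verit))
qed

lemma abs_preact_sgd_drift_le:
  assumes "\<And>s. sqnorm d (xs s) \<le> 1" "i \<in> {1..d}" "0 \<le> eta" "sqnorm i p \<le> 2"
  shows "\<bar>preact \<omega> (sgd m Q eta \<omega> xs t) i r p - preact \<omega> zero_params i r p\<bar>
    \<le> 12 * eta * real t * \<bar>\<omega> (Aidx i r)\<bar>"
proof (induction t)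
  case (Suc t)
  have "\<bar>eta * preact_grad m Q \<omega> (sgd m Q eta \<omega> xs t) (xs t) i r p\<bar> \<le> eta * (12 * \<bar>\<omega> (Aidx i r)\<bar>)"
    using abs_preact_grad_le[OF assms(1,2,4)] assms(3) by (simp add: abs_mult mult_left_mono)
  with Suc.IH show ?case
    unfolding preact_sgd_Suc by (simp add: algebra_simps)
qed simp

text \<open>Neuron \<open>r\<close> can only leave the linear regime of the pseudo-network if its
  initial preactivation lies within the drift \<open>C \<bar>a\<^sub>r\<bar>\<close> of the kink of the ReLU.\<close>
definition flip_term :: "real \<Rightarrow> (pidx \<Rightarrow> real) \<Rightarrow> nat \<Rightarrow> nat \<Rightarrow> (nat \<Rightarrow> real) \<Rightarrow> real" where
  "flip_term C \<omega> i r p = \<bar>\<omega> (Aidx i r)\<bar> *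
     (if \<bar>preact \<omega> zero_params i r p\<bar> \<le> C * \<bar>\<omega> (Aidx i r)\<bar> then C * \<bar>\<omega> (Aidx i r)\<bar> else 0)"

definition flip_bound :: "nat \<Rightarrow> real \<Rightarrow> (pidx \<Rightarrow> real) \<Rightarrow> nat \<Rightarrow> (nat \<Rightarrow> real) \<Rightarrow> real" where
  "flip_bound m C \<omega> i p = (\<Sum>r=1..m. flip_term C \<omega> i r p)"

lemma abs_Net_Pseudo_sgd_le:
  assumes "\<And>s. sqnorm d (xs s) \<le> 1" "i \<in> {1..d}" "0 \<le> eta" "sqnorm i p \<le> 2"
  shows "\<bar>Net m \<omega> (sgd m Q eta \<omega> xs t) i p - Pseudo m \<omega> (sgd m Q eta \<omega> xs t) i p\<bar>
    \<le> flip_bound m (12 * eta * real t) \<omega> i p"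
proof -
  let ?th = "sgd m Q eta \<omega> xs t"
  have "Net m \<omega> ?th i p - Pseudo m \<omega> ?th i p =
      (\<Sum>r=1..m. \<omega> (Aidx i r) * (relu (preact \<omega> ?th i r p)
                  - relu' (preact \<omega> zero_params i r p) * preact \<omega> ?th i r p))"
    unfolding Net_def Pseudo_def by (simp add: sum_subtractf algebra_simps)
  also have "\<bar>\<dots>\<bar> \<le> flip_bound m (12 * eta * real t) \<omega> i p"
    unfolding flip_bound_def
  proof (rule order_trans[OF sum_abs sum_mono])
    fix r
    have "\<bar>relu (preact \<omega> ?th i r p) - relu' (preact \<omega> zero_params i r p) * preact \<omega> ?th i r p\<bar>
        \<le> (if \<bar>preact \<omega> zero_params i r p\<bar> \<le> 12 * eta * real t * \<bar>\<omega> (Aidx i r)\<bar>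
            then 12 * eta * real t * \<bar>\<omega> (Aidx i r)\<bar> else 0)"
      by (rule abs_relu_linearization_le) (rule abs_preact_sgd_drift_le[OF assms])
    then show "\<bar>\<omega> (Aidx i r) * (relu (preact \<omega> ?th i r p)
                  - relu' (preact \<omega> zero_params i r p) * preact \<omega> ?th i r p)\<bar>
        \<le> flip_term (12 * eta * real t) \<omega> i r p"
      unfolding flip_term_def by (simp add: abs_mult mult_left_mono)
  qed
  finally show ?thesis .
qed

lemma abs_Lapprox_diff_le:
  assumes "0 \<le> Delta Q i x"
  shows "\<bar>Lapprox Q h1 i x - Lapprox Q h2 i x\<bar>
    \<le> (\<Sum>j=1..Q. Delta Q i x * \<bar>h1 (qpt Q j i x) - h2 (qpt Q j i x)\<bar>) + \<bar>h1 x - h2 x\<bar>"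
proof -
  have "\<bar>\<Sum>j=1..Q. Delta Q i x * (phi (h1 (qpt Q j i x)) - phi (h2 (qpt Q j i x)))\<bar>
      \<le> (\<Sum>j=1..Q. Delta Q i x * \<bar>h1 (qpt Q j i x) - h2 (qpt Q j i x)\<bar>)"
    using assms
    by (intro order_trans[OF sum_abs sum_mono]) (simp add: abs_mult mult_left_mono abs_phi_diff_le)
  moreover have "Lapprox Q h1 i x - Lapprox Q h2 i x =
      (\<Sum>j=1..Q. Delta Q i x * (phi (h1 (qpt Q j i x)) - phi (h2 (qpt Q j i x))))
      - (ln (phi (h1 x)) - ln (phi (h2 x)))"
    unfolding Lapprox_def by (simp add: right_diff_distrib sum_subtractf)
  ultimately show ?thesis
    using abs_ln_phi_diff_le[of "h1 x" "h2 x"] by linarith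
qed

definition loss_gap_bound ::
    "nat \<Rightarrow> nat \<Rightarrow> real \<Rightarrow> (pidx \<Rightarrow> real) \<Rightarrow> nat \<Rightarrow> (nat \<Rightarrow> real) \<Rightarrow> real" where
  "loss_gap_bound m Q C \<omega> i x =
     (\<Sum>j=1..Q. Delta Q i x * flip_bound m C \<omega> i (qpt Q j i x)) + flip_bound m C \<omega> i x"

lemma abs_Lapprox_Net_Pseudo_sgd_le:
  assumes "\<And>s. sqnorm d (xs s) \<le> 1" "i \<in> {1..d}" "0 \<le> eta" "sqnorm d x \<le> 1"
  shows "\<bar>Lapprox Q (Net m \<omega> (sgd m Q eta \<omega> xs t) i) i x
          - Lapprox Q (Pseudo m \<omega> (sgd m Q eta \<omega> xs t) i) i x\<bar>
    \<le> loss_gap_bound m Q (12 * eta * real t) \<omega> i x"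
proof -
  let ?N = "Net m \<omega> (sgd m Q eta \<omega> xs t) i" and ?P = "Pseudo m \<omega> (sgd m Q eta \<omega> xs t) i"
  have Delta: "0 \<le> Delta Q i x"
    using abs_coord_le_1[OF assms(4,2)] by (rule Delta_nonneg)
  have "sqnorm i x \<le> sqnorm d x"
    using assms(2) by (intro sqnorm_mono) auto
  then have "\<bar>?N x - ?P x\<bar> \<le> flip_bound m (12 * eta * real t) \<omega> i x"
    using assms by (intro abs_Net_Pseudo_sgd_le) auto
  moreover have "(\<Sum>j=1..Q. Delta Q i x * \<bar>?N (qpt Q j i x) - ?P (qpt Q j i x)\<bar>)
      \<le> (\<Sum>j=1..Q. Delta Q i x * flip_bound m (12 * eta * real t) \<omega> i (qpt Q j i x))"
    using Delta assms
    by (intro sum_mono mult_left_mono abs_Net_Pseudo_sgd_le sqnorm_qpt_le) auto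
  ultimately show ?thesis
    using abs_Lapprox_diff_le[OF Delta, of ?N ?P] unfolding loss_gap_bound_def by linarith
qed

lemma sets_init_dist [simp]: "sets (init_dist m eps_a p) = sets borel"
  by (cases p) (simp_all add: init_dist_def gauss_def)

lemma measurable_init_coord [measurable]:
  "(\<lambda>\<omega>. \<omega> p) \<in> borel_measurable (PiM I (init_dist m eps_a))"
proof (cases "p \<in> I")
  case True
  then have "(\<lambda>\<omega>. \<omega> p) \<in> measurable (PiM I (init_dist m eps_a)) (init_dist m eps_a p)"
    by (rule measurable_component_singleton)
  then show ?thesis
    using measurable_cong_sets[OF refl sets_init_dist] by blast
next
  case False
  then have "(\<lambda>\<omega>. \<omega> p) \<in> borel_measurable (PiM I (init_dist m eps_a)) \<longleftrightarrow>
      (\<lambda>\<omega>. undefined :: real) \<in> borel_measurable (PiM I (init_dist m eps_a))"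
    by (intro measurable_cong) (auto simp: space_PiM PiE_def extensional_def)
  then show ?thesis
    by simp
qed

lemma relu_measurable [measurable]: "relu \<in> borel_measurable borel"
  unfolding relu_def by measurable

lemma relu'_measurable [measurable]: "relu' \<in> borel_measurable borel"
  unfolding relu'_def by measurable

lemma phi_measurable [measurable]: "phi \<in> borel_measurable borel"
  unfolding phi_def by measurable

lemma phi'_measurable [measurable]: "phi' \<in> borel_measurable borel"
  unfolding phi'_def by measurable

lemma preact_zero_measurable [measurable]:
  assumes [measurable]: "\<And>p. (\<lambda>\<omega>. \<omega> p) \<in> borel_measurable M"
  shows "(\<lambda>\<omega>. preact \<omega> zero_params i r z) \<in> borel_measurable M"
  unfolding preact_def zero_params_def by measurable

context
  fixes M :: "(pidx \<Rightarrow> real) measure" and th :: "(pidx \<Rightarrow> real) \<Rightarrow> params"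
  assumes coord_measurable [measurable]: "\<And>p. (\<lambda>\<omega>. \<omega> p) \<in> borel_measurable M"
    and fst_measurable [measurable]: "\<And>i r k. (\<lambda>\<omega>. fst (th \<omega>) i r k) \<in> borel_measurable M"
    and snd_measurable [measurable]: "\<And>i r. (\<lambda>\<omega>. snd (th \<omega>) i r) \<in> borel_measurable M"
begin

lemma preact_measurable [measurable]: "(\<lambda>\<omega>. preact \<omega> (th \<omega>) i r z) \<in> borel_measurable M"
  unfolding preact_def by measurable

lemma Net_measurable [measurable]: "(\<lambda>\<omega>. Net m \<omega> (th \<omega>) i z) \<in> borel_measurable M"
  unfolding Net_def by measurable

lemma Pseudo_measurable [measurable]: "(\<lambda>\<omega>. Pseudo m \<omega> (th \<omega>) i z) \<in> borel_measurable M"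
  using preact_zero_measurable[OF coord_measurable] unfolding Pseudo_def by measurable

lemma gradL_w_measurable [measurable]:
  "(\<lambda>\<omega>. gradL_w m Q \<omega> (th \<omega>) x i r k) \<in> borel_measurable M"
  unfolding gradL_w_def gradN_w_def by measurable

lemma gradL_b_measurable [measurable]:
  "(\<lambda>\<omega>. gradL_b m Q \<omega> (th \<omega>) x i r) \<in> borel_measurable M"
  unfolding gradL_b_def gradN_b_def by measurable

end

lemma sgd_measurable:
  assumes [measurable]: "\<And>p. (\<lambda>\<omega>. \<omega> p) \<in> borel_measurable M"
  shows "(\<forall>i r k. (\<lambda>\<omega>. fst (sgd m Q eta \<omega> xs t) i r k) \<in> borel_measurable M) \<and>
         (\<forall>i r. (\<lambda>\<omega>. snd (sgd m Q eta \<omega> xs t) i r) \<in> borel_measurable M)"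
proof (induction t)
  case (Suc t)
  then have [measurable]: "(\<lambda>\<omega>. fst (sgd m Q eta \<omega> xs t) i r k) \<in> borel_measurable M"
      "(\<lambda>\<omega>. snd (sgd m Q eta \<omega> xs t) i r) \<in> borel_measurable M" for i r k
    by auto
  note [measurable] = gradL_w_measurable[OF assms] gradL_b_measurable[OF assms]
  show ?case
    by (simp add: Let_def)
qed (simp add: zero_params_def)

lemma flip_term_measurable [measurable]:
  "(\<lambda>\<omega>. flip_term C \<omega> i r p) \<in> borel_measurable (PiM I (init_dist m eps_a))"
  unfolding flip_term_def by measurable

lemma flip_bound_measurable [measurable]:
  "(\<lambda>\<omega>. flip_bound m C \<omega> i p) \<in> borel_measurable (PiM I (init_dist m eps_a))"
  unfolding flip_bound_def by measurable

lemma loss_gap_bound_measurable [measurable]: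
  "(\<lambda>\<omega>. loss_gap_bound m Q C \<omega> i x) \<in> borel_measurable (PiM I (init_dist m eps_a))"
  unfolding loss_gap_bound_def by measurable

section \<open>Gaussian estimates\<close>

lemma prob_space_init_dist: "0 < eps_a \<Longrightarrow> 1 \<le> m \<Longrightarrow> prob_space (init_dist m eps_a p)"
  by (cases p) (auto simp: init_dist_def gauss_def intro!: prob_space_normal_density)

lemma finite_init_index: "finite (init_index d m)"
proof -
  have W: "{Widx i r k | i r k. i \<in> {1..d} \<and> r \<in> {1..m} \<and> k \<in> {1..i+1}}
      \<subseteq> (\<lambda>(i, r, k). Widx i r k) ` ({1..d} \<times> {1..m} \<times> {1..d+1})"
    by (auto intro!: image_eqI[where x = "(i, r, k)" for i r k])
  have A: "{Aidx i r | i r. i \<in> {1..d} \<and> r \<in> {1..m}} = (\<lambda>(i, r). Aidx i r) ` ({1..d} \<times> {1..m})"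
    and B: "{Bidx i r | i r. i \<in> {1..d} \<and> r \<in> {1..m}} = (\<lambda>(i, r). Bidx i r) ` ({1..d} \<times> {1..m})"
    by auto
  show ?thesis
    unfolding init_index_def A B by (intro finite_UnI finite_imageI finite_subset[OF W]) auto
qed

lemma normal_density_le:
  assumes "0 < s"
  shows "normal_density 0 s y \<le> 1 / (sqrt (2 * pi) * s)"
proof -
  have "normal_density 0 s y \<le> 1 / sqrt (2 * pi * s\<^sup>2) * 1"
    unfolding normal_density_def by (intro mult_left_mono) auto
  also have "sqrt (2 * pi * s\<^sup>2) = sqrt (2 * pi) * s"
    using assms by (simp add: real_sqrt_mult)
  finally show ?thesis
    by simp
qed

lemma emeasure_gauss_interval_le:
  assumes "0 < s" "0 \<le> B"
  shows "emeasure (gauss s) {c - B .. c + B} \<le> ennreal (2 * B / (sqrt (2 * pi) * s))"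
proof -
  have "emeasure (gauss s) {c - B .. c + B} =
      (\<integral>\<^sup>+ y. ennreal (normal_density 0 s y) * indicator {c - B .. c + B} y \<partial>lborel)"
    unfolding gauss_def by (subst emeasure_density) auto
  also have "\<dots> \<le> (\<integral>\<^sup>+ y. ennreal (1 / (sqrt (2 * pi) * s)) * indicator {c - B .. c + B} y \<partial>lborel)"
    using assms by (intro nn_integral_mono mult_right_mono ennreal_leI normal_density_le) auto
  also have "\<dots> = ennreal (1 / (sqrt (2 * pi) * s)) * ennreal (2 * B)"
    using assms by (subst nn_integral_cmult_indicator) auto
  finally show ?thesis
    using assms by (simp add: ennreal_mult[symmetric])
qed

lemma nn_integral_gauss_abs_cube:
  assumes "0 < e" "0 \<le> K"
  shows "(\<integral>\<^sup>+ a. ennreal (K * \<bar>a\<bar> ^ 3) \<partial>gauss e) = ennreal (K * (2 * e ^ 3 * sqrt (2 / pi)))"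
proof -
  let ?f = "\<lambda>a. K * (normal_density 0 e a * \<bar>a - 0\<bar> ^ (2 * 1 + 1))"
  have "(\<integral>\<^sup>+ a. ennreal (K * \<bar>a\<bar> ^ 3) \<partial>gauss e) = (\<integral>\<^sup>+ a. ennreal (?f a) \<partial>lborel)"
    unfolding gauss_def using assms
    by (subst nn_integral_density) (auto intro!: nn_integral_cong simp: ennreal_mult[symmetric] mult_ac)
  also have "\<dots> = ennreal (\<integral> a. ?f a \<partial>lborel)"
    using assms by (intro nn_integral_eq_integral integrable_mult_right integrable_normal_moment_abs) auto
  also have "(\<integral> a. ?f a \<partial>lborel) = K * (2 ^ 1 * e ^ (2 * 1 + 1) * fact 1 * sqrt (2 / pi))"
    using integral_normal_moment_abs_odd[where k = 1 and \<mu> = 0 and \<sigma> = e] assms by simp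
  finally show ?thesis
    by simp
qed

lemma nn_integral_gauss_window_le:
  assumes "0 < s" "0 \<le> C"
  shows "(\<integral>\<^sup>+ y. ennreal (\<bar>a\<bar> * (if \<bar>L + y\<bar> \<le> C * \<bar>a\<bar> then C * \<bar>a\<bar> else 0)) \<partial>gauss s)
    \<le> ennreal (2 * C\<^sup>2 * \<bar>a\<bar> ^ 3 / (sqrt (2 * pi) * s))"
proof -
  have "(\<integral>\<^sup>+ y. ennreal (\<bar>a\<bar> * (if \<bar>L + y\<bar> \<le> C * \<bar>a\<bar> then C * \<bar>a\<bar> else 0)) \<partial>gauss s)
      = (\<integral>\<^sup>+ y. ennreal (C * \<bar>a\<bar>\<^sup>2) * indicator {- L - C * \<bar>a\<bar> .. - L + C * \<bar>a\<bar>} y \<partial>gauss s)"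
    by (intro nn_integral_cong) (auto simp: indicator_def power2_eq_square mult_ac)
  also have "\<dots> = ennreal (C * \<bar>a\<bar>\<^sup>2) * emeasure (gauss s) {- L - C * \<bar>a\<bar> .. - L + C * \<bar>a\<bar>}"
    by (rule nn_integral_cmult_indicator) (simp add: gauss_def)
  also have "\<dots> \<le> ennreal (C * \<bar>a\<bar>\<^sup>2) * ennreal (2 * (C * \<bar>a\<bar>) / (sqrt (2 * pi) * s))"
    using assms by (intro mult_left_mono emeasure_gauss_interval_le) auto
  also have "\<dots> = ennreal (2 * C\<^sup>2 * \<bar>a\<bar> ^ 3 / (sqrt (2 * pi) * s))"
    using assms by (simp add: ennreal_mult[symmetric] power2_eq_square power3_eq_cube mult_ac)
  finally show ?thesis .
qed

lemma nn_integral_PiM_component: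
  assumes "\<And>j. j \<in> I \<Longrightarrow> prob_space (M j)" "i \<in> I" "f \<in> borel_measurable (M i)"
  shows "(\<integral>\<^sup>+\<omega>. f (\<omega> i) \<partial>PiM I M) = (\<integral>\<^sup>+x. f x \<partial>M i)"
proof -
  have "(\<integral>\<^sup>+x. f x \<partial>M i) = (\<integral>\<^sup>+x. f x \<partial>distr (PiM I M) (M i) (\<lambda>\<omega>. \<omega> i))"
    using distr_PiM_component[of I M i] assms(1,2) by simp
  also have "\<dots> = (\<integral>\<^sup>+\<omega>. f (\<omega> i) \<partial>PiM I M)"
    using assms(2,3) by (intro nn_integral_distr) (auto simp: measurable_distr_eq1)
  finally show ?thesis ..
qed

lemma nn_integral_flip_term_le:
  assumes "0 < eps_a" "1 \<le> m" "i \<in> {1..d}" "r \<in> {1..m}" "0 \<le> C"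
  shows "(\<integral>\<^sup>+\<omega>. ennreal (flip_term C \<omega> i r p) \<partial>init_measure d m eps_a)
    \<le> ennreal (2 * C\<^sup>2 * sqrt m * eps_a ^ 3)"
proof -
  let ?D = "init_dist m eps_a"
  define a where "a = Aidx i r"
  define b where "b = Bidx i r"
  define J where "J = init_index d m - {b}"
  define K where "K = 2 * C\<^sup>2 * sqrt m / sqrt (2 * pi)"
  define L where "L \<omega> = (\<Sum>k=1..i+1. \<omega> (Widx i r k) * xhat i p k)" for \<omega> :: "pidx \<Rightarrow> real"
  define g where "g \<omega> = ennreal (\<bar>\<omega> a\<bar> * (if \<bar>L \<omega> + \<omega> b\<bar> \<le> C * \<bar>\<omega> a\<bar> then C * \<bar>\<omega> a\<bar> else 0))"
    for \<omega> :: "pidx \<Rightarrow> real"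
  have prob: "prob_space (?D q)" for q
    using assms(1,2) by (rule prob_space_init_dist)
  interpret product_sigma_finite ?D
    by (simp add: product_sigma_finite_def prob_space_imp_sigma_finite prob)
  have index: "init_index d m = insert b J" "b \<notin> J" "finite J" "a \<in> J"
    using assms(3,4) finite_init_index[of d m] unfolding J_def init_index_def a_def b_def by auto
  have [measurable]: "g \<in> borel_measurable (PiM (insert b J) ?D)"
    unfolding g_def L_def by measurable
  have "preact \<omega> zero_params i r p = L \<omega> + \<omega> b" for \<omega>
    by (simp add: preact_def L_def b_def zero_params_def)
  then have "(\<integral>\<^sup>+\<omega>. ennreal (flip_term C \<omega> i r p) \<partial>init_measure d m eps_a)
      = integral\<^sup>N (PiM (insert b J) ?D) g"
    unfolding init_measure_def index(1) g_def a_def flip_term_def by simp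
  also have "\<dots> = (\<integral>\<^sup>+x. (\<integral>\<^sup>+ y. g (x(b := y)) \<partial>?D b) \<partial>PiM J ?D)"
    using index by (intro product_nn_integral_insert) auto
  also have "\<dots> \<le> (\<integral>\<^sup>+x. ennreal (K * \<bar>x a\<bar> ^ 3) \<partial>PiM J ?D)"
  proof (rule nn_integral_mono)
    fix x :: "pidx \<Rightarrow> real"
    have Db: "?D b = gauss (1 / sqrt m)"
      by (simp add: b_def init_dist_def)
    have "L (x(b := y)) = L x" "a \<noteq> b" for y
      by (simp_all add: L_def a_def b_def)
    then have "(\<integral>\<^sup>+ y. g (x(b := y)) \<partial>?D b) =
        (\<integral>\<^sup>+ y. ennreal (\<bar>x a\<bar> * (if \<bar>L x + y\<bar> \<le> C * \<bar>x a\<bar> then C * \<bar>x a\<bar> else 0))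
          \<partial>gauss (1 / sqrt m))"
      using Db by (simp add: g_def cong: if_cong)
    also have "\<dots> \<le> ennreal (2 * C\<^sup>2 * \<bar>x a\<bar> ^ 3 / (sqrt (2 * pi) * (1 / sqrt m)))"
      using assms(2,5) by (intro nn_integral_gauss_window_le) auto
    also have "\<dots> = ennreal (K * \<bar>x a\<bar> ^ 3)"
      unfolding K_def by (simp add: field_simps)
    finally show "(\<integral>\<^sup>+ y. g (x(b := y)) \<partial>?D b) \<le> ennreal (K * \<bar>x a\<bar> ^ 3)" .
  qed
  also have "\<dots> = (\<integral>\<^sup>+x. ennreal (K * \<bar>x\<bar> ^ 3) \<partial>gauss eps_a)"
  proof -
    have "(\<lambda>z. ennreal (K * \<bar>z\<bar> ^ 3)) \<in> borel_measurable (?D a)"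
      unfolding measurable_cong_sets[OF sets_init_dist refl] by measurable
    then show ?thesis
      using prob index(4) by (subst nn_integral_PiM_component) (auto simp: a_def init_dist_def)
  qed
  also have "\<dots> = ennreal (K * (2 * eps_a ^ 3 * sqrt (2 / pi)))"
    unfolding K_def using assms(1) by (intro nn_integral_gauss_abs_cube) auto
  also have "\<dots> \<le> ennreal (2 * C\<^sup>2 * sqrt m * eps_a ^ 3)"
  proof (rule ennreal_leI)
    have "sqrt (2 / pi) / sqrt (2 * pi) = 1 / pi"
      by (simp add: real_sqrt_divide real_sqrt_mult field_simps)
    then have "K * (2 * eps_a ^ 3 * sqrt (2 / pi)) = (4 / pi) * (C\<^sup>2 * sqrt m * eps_a ^ 3)"
      unfolding K_def by (simp add: field_simps)
    also have "\<dots> \<le> 2 * (C\<^sup>2 * sqrt m * eps_a ^ 3)"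
      using assms(1) pi_gt3 by (intro mult_right_mono) (auto simp: field_simps)
    finally show "K * (2 * eps_a ^ 3 * sqrt (2 / pi)) \<le> 2 * C\<^sup>2 * sqrt m * eps_a ^ 3"
      by simp
  qed
  finally show ?thesis .
qed

section \<open>Expected loss gap and Markov's inequality\<close>

lemma nn_integral_weighted_sum_le:
  fixes f :: "'j \<Rightarrow> 'a \<Rightarrow> real"
  assumes "finite J" "0 \<le> B" "\<And>j. j \<in> J \<Longrightarrow> 0 \<le> w j"
    and "\<And>j x. j \<in> J \<Longrightarrow> 0 \<le> f j x" "\<And>j. j \<in> J \<Longrightarrow> f j \<in> borel_measurable M"
    and "\<And>j. j \<in> J \<Longrightarrow> (\<integral>\<^sup>+x. ennreal (f j x) \<partial>M) \<le> ennreal B"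
  shows "(\<integral>\<^sup>+x. ennreal (\<Sum>j\<in>J. w j * f j x) \<partial>M) \<le> ennreal ((\<Sum>j\<in>J. w j) * B)"
proof -
  have "(\<integral>\<^sup>+x. ennreal (\<Sum>j\<in>J. w j * f j x) \<partial>M) = (\<integral>\<^sup>+x. (\<Sum>j\<in>J. ennreal (w j) * ennreal (f j x)) \<partial>M)"
    using assms(3,4) by (intro nn_integral_cong) (simp add: sum_ennreal[symmetric] ennreal_mult)
  also have "\<dots> = (\<Sum>j\<in>J. ennreal (w j) * (\<integral>\<^sup>+x. ennreal (f j x) \<partial>M))"
    using assms(5) by (simp add: nn_integral_sum nn_integral_cmult)
  also have "\<dots> \<le> (\<Sum>j\<in>J. ennreal (w j) * ennreal B)"
    using assms(6) by (intro sum_mono mult_left_mono) auto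
  also have "\<dots> = ennreal ((\<Sum>j\<in>J. w j) * B)"
    using assms(2,3) by (simp add: sum_ennreal[symmetric] ennreal_mult sum_distrib_right sum_nonneg)
  finally show ?thesis .
qed

lemma flip_term_nonneg: "0 \<le> C \<Longrightarrow> 0 \<le> flip_term C \<omega> i r p"
  unfolding flip_term_def by simp

lemma flip_bound_nonneg: "0 \<le> C \<Longrightarrow> 0 \<le> flip_bound m C \<omega> i p"
  unfolding flip_bound_def by (intro sum_nonneg flip_term_nonneg)

lemma nn_integral_flip_bound_le:
  assumes "0 < eps_a" "1 \<le> m" "i \<in> {1..d}" "0 \<le> C"
  shows "(\<integral>\<^sup>+\<omega>. ennreal (flip_bound m C \<omega> i p) \<partial>init_measure d m eps_a)
    \<le> ennreal (real m * (2 * C\<^sup>2 * sqrt m * eps_a ^ 3))"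
proof -
  have "(\<integral>\<^sup>+\<omega>. ennreal (\<Sum>r=1..m. 1 * flip_term C \<omega> i r p) \<partial>init_measure d m eps_a)
      \<le> ennreal ((\<Sum>r=1..m. 1) * (2 * C\<^sup>2 * sqrt m * eps_a ^ 3))"
    using assms
    by (intro nn_integral_weighted_sum_le nn_integral_flip_term_le flip_term_nonneg)
      (auto simp: init_measure_def)
  then show ?thesis
    unfolding flip_bound_def by simp
qed

lemma nn_integral_loss_gap_bound_le:
  assumes "0 < eps_a" "1 \<le> m" "i \<in> {1..d}" "0 \<le> C" "\<bar>x i\<bar> \<le> 1"
  shows "(\<integral>\<^sup>+\<omega>. ennreal (loss_gap_bound m Q C \<omega> i x) \<partial>init_measure d m eps_a)
    \<le> ennreal (3 * (real m * (2 * C\<^sup>2 * sqrt m * eps_a ^ 3)))"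
proof -
  let ?M = "init_measure d m eps_a" and ?B = "real m * (2 * C\<^sup>2 * sqrt m * eps_a ^ 3)"
  have Delta: "0 \<le> Delta Q i x"
    using assms(5) by (rule Delta_nonneg)
  have B: "0 \<le> ?B"
    using assms(1) by simp
  have [measurable]: "(\<lambda>\<omega>. flip_bound m C \<omega> i p) \<in> borel_measurable ?M" for p
    unfolding init_measure_def by measurable
  have "(\<integral>\<^sup>+\<omega>. ennreal (loss_gap_bound m Q C \<omega> i x) \<partial>?M)
      = (\<integral>\<^sup>+\<omega>. ennreal (\<Sum>j=1..Q. Delta Q i x * flip_bound m C \<omega> i (qpt Q j i x)) \<partial>?M)
        + (\<integral>\<^sup>+\<omega>. ennreal (flip_bound m C \<omega> i x) \<partial>?M)"
    unfolding loss_gap_bound_def using Delta assms(4)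
    by (subst nn_integral_add[symmetric])
      (auto intro!: nn_integral_cong ennreal_plus sum_nonneg mult_nonneg_nonneg flip_bound_nonneg)
  also have "\<dots> \<le> ennreal ((\<Sum>j=1..Q. Delta Q i x) * ?B) + ennreal ?B"
    using assms Delta by (intro add_mono nn_integral_weighted_sum_le nn_integral_flip_bound_le)
      (auto intro: flip_bound_nonneg)
  also have "\<dots> \<le> ennreal (2 * ?B) + ennreal ?B"
    using sum_Delta_le[where x = x, OF assms(5)] B assms(1) by (intro add_mono ennreal_leI mult_right_mono) auto
  also have "\<dots> = ennreal (3 * ?B)"
    using B by (simp flip: ennreal_plus)
  finally show ?thesis .
qed

lemma (in prob_space) prob_less_ge_Markov:
  fixes f :: "'a \<Rightarrow> real"
  assumes [measurable]: "f \<in> borel_measurable M"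
    and "(\<integral>\<^sup>+x. ennreal (f x) \<partial>M) \<le> ennreal B" "0 \<le> B" "0 < c"
  shows "1 - B / c \<le> prob {x \<in> space M. f x < c}"
proof -
  let ?A = "{x \<in> space M. c \<le> f x}"
  have "?A \<subseteq> {x \<in> space M. 1 \<le> ennreal (1 / c) * ennreal (f x)}"
  proof safe
    fix x assume "c \<le> f x"
    then have "ennreal 1 \<le> ennreal (1 / c * f x)"
      using assms(4) by (intro ennreal_leI) (simp add: field_simps)
    also have "\<dots> = ennreal (1 / c) * ennreal (f x)"
      using assms(4) \<open>c \<le> f x\<close> by (intro ennreal_mult) auto
    finally show "1 \<le> ennreal (1 / c) * ennreal (f x)"
      by simp
  qed
  then have "emeasure M ?A \<le> ennreal (1 / c) * (\<integral>\<^sup>+x. ennreal (f x) * indicator (space M) x \<partial>M)"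
    by (intro order_trans[OF emeasure_mono nn_integral_Markov_inequality]) auto
  also have "(\<integral>\<^sup>+x. ennreal (f x) * indicator (space M) x \<partial>M) = (\<integral>\<^sup>+x. ennreal (f x) \<partial>M)"
    by (intro nn_integral_cong) simp
  also have "ennreal (1 / c) * \<dots> \<le> ennreal (1 / c) * ennreal B"
    using assms(2) by (rule mult_left_mono) simp
  also have "\<dots> = ennreal (B / c)"
    using assms(3,4) by (simp flip: ennreal_mult)
  finally have "prob ?A \<le> B / c"
    using assms(3,4) by (simp add: emeasure_eq_measure)
  moreover have "prob {x \<in> space M. f x < c} = prob (space M - ?A)"
    by (rule arg_cong[where f = prob]) auto
  moreover have "prob (space M - ?A) = 1 - prob ?A"
    by (rule prob_compl) measurable
  ultimately show ?thesis
    by simp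
qed

lemma Lapprox_measurable:
  assumes [measurable]: "\<And>z. (\<lambda>\<omega>. h \<omega> z) \<in> borel_measurable M"
  shows "(\<lambda>\<omega>. Lapprox Q (h \<omega>) i x) \<in> borel_measurable M"
  unfolding Lapprox_def by measurable

lemma prob_abs_Lapprox_Net_Pseudo_sgd_le:
  assumes "0 < eps_a" "1 \<le> m" "0 \<le> eta" "\<And>s. sqnorm d (xs s) \<le> 1" "i \<in> {1..d}"
    and "sqnorm d x \<le> 1" "0 < tau"
  shows "1 - 3 * (real m * (2 * (12 * eta * real t)\<^sup>2 * sqrt m * eps_a ^ 3)) / tau
    \<le> measure (init_measure d m eps_a) {\<omega> \<in> space (init_measure d m eps_a).
        \<bar>Lapprox Q (Net m \<omega> (sgd m Q eta \<omega> xs t) i) i x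
         - Lapprox Q (Pseudo m \<omega> (sgd m Q eta \<omega> xs t) i) i x\<bar> \<le> tau}"
proof -
  let ?M = "init_measure d m eps_a" and ?C = "12 * eta * real t"
  interpret prob_space ?M
    unfolding init_measure_def using assms(1,2) by (intro prob_space_PiM prob_space_init_dist)
  have coord [measurable]: "(\<lambda>\<omega>. \<omega> p) \<in> borel_measurable ?M" for p
    unfolding init_measure_def by measurable
  have "(\<lambda>\<omega>. fst (sgd m Q eta \<omega> xs t) i r k) \<in> borel_measurable ?M"
      "(\<lambda>\<omega>. snd (sgd m Q eta \<omega> xs t) i r) \<in> borel_measurable ?M" for i r k
    using sgd_measurable[OF coord] by auto
  note [measurable] = Lapprox_measurable[OF Net_measurable[OF coord this]]
    Lapprox_measurable[OF Pseudo_measurable[OF coord this]]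
  have [measurable]: "(\<lambda>\<omega>. loss_gap_bound m Q ?C \<omega> i x) \<in> borel_measurable ?M"
    unfolding init_measure_def by measurable
  let ?gap = "\<lambda>\<omega>. \<bar>Lapprox Q (Net m \<omega> (sgd m Q eta \<omega> xs t) i) i x
                    - Lapprox Q (Pseudo m \<omega> (sgd m Q eta \<omega> xs t) i) i x\<bar>"
  have "?gap \<omega> \<le> loss_gap_bound m Q ?C \<omega> i x" for \<omega>
    using assms by (intro abs_Lapprox_Net_Pseudo_sgd_le) auto
  then have sub: "{\<omega> \<in> space ?M. loss_gap_bound m Q ?C \<omega> i x < tau} \<subseteq> {\<omega> \<in> space ?M. ?gap \<omega> \<le> tau}"
    by (smt (verit) Collect_mono_iff)
  have "1 - 3 * (real m * (2 * ?C\<^sup>2 * sqrt m * eps_a ^ 3)) / tau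
      \<le> prob {\<omega> \<in> space ?M. loss_gap_bound m Q ?C \<omega> i x < tau}"
    using assms abs_coord_le_1[OF assms(6,5)]
    by (intro prob_less_ge_Markov nn_integral_loss_gap_bound_le) auto
  also have "\<dots> \<le> prob {\<omega> \<in> space ?M. ?gap \<omega> \<le> tau}"
    using sub by (rule finite_measure_mono) measurable
  finally show ?thesis .
qed

lemma mean_bound_le_delta:
  fixes m t :: nat and c1 c4 eps_a eta :: real
  assumes "2 \<le> m" "1 \<le> c1" "1 \<le> c4" "0 \<le> eps_a" "0 \<le> eta"
  shows "c1 * (3 * (real m * (2 * (12 * eta * real t)\<^sup>2 * sqrt m * eps_a ^ 3)))
    \<le> 3 * (192 * eta\<^sup>2 * real m powr (3/2) * (6 * c1 * eps_a * sqrt (2 * ln (real m)))\<^sup>2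
           * c1 * c4 * eps_a * (real t)\<^sup>2 * sqrt (ln (real m)) / sqrt pi)"
proof -
  define W where "W = c1 * eta\<^sup>2 * (real t)\<^sup>2 * (real m * sqrt m) * eps_a ^ 3"
  define X where "X = c1\<^sup>2 * c4 * (ln (real m) * sqrt (ln (real m))) / sqrt pi"
  have "ln 2 \<le> ln (real m)"
    using assms(1) by simp
  then have ln_m: "1 / 2 \<le> ln (real m)"
    using ln2_ge_two_thirds by linarith
  have "1 / 2 \<le> sqrt (ln (real m))"
    using real_sqrt_le_mono[of "1 / 4" "ln (real m)"] ln_m by (simp add: real_sqrt_divide)
  with ln_m have "(1 / 2) * (1 / 2) \<le> ln (real m) * sqrt (ln (real m))"
    by (intro mult_mono) auto
  moreover have "1 * 1 \<le> c1\<^sup>2 * c4"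
    using assms(2,3) one_le_power[of c1 2] by (intro mult_mono) auto
  ultimately have "1 * (1 / 4) \<le> c1\<^sup>2 * c4 * (ln (real m) * sqrt (ln (real m)))"
    by (intro mult_mono) auto
  moreover have "sqrt pi \<le> 2"
    using pi_less_4 real_sqrt_le_mono[of pi 4] by simp
  ultimately have X: "1 / 8 \<le> X"
    unfolding X_def by (simp add: field_simps)
  have "real m powr (3/2) = real m powr (1 + 1/2)"
    by simp
  also have "\<dots> = real m * sqrt m"
    by (subst powr_add) (simp add: powr_half_sqrt)
  moreover have "(6 * c1 * eps_a * sqrt (2 * ln (real m)))\<^sup>2 = 72 * c1\<^sup>2 * eps_a\<^sup>2 * ln (real m)"
    using ln_m by (simp add: power_mult_distrib real_sqrt_pow2)
  ultimately have "3 * (192 * eta\<^sup>2 * real m powr (3/2) * (6 * c1 * eps_a * sqrt (2 * ln (real m)))\<^sup>2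
           * c1 * c4 * eps_a * (real t)\<^sup>2 * sqrt (ln (real m)) / sqrt pi) = 41472 * W * X"
    unfolding W_def X_def by (simp only:) (simp add: field_simps power2_eq_square power3_eq_cube)
  moreover have "c1 * (3 * (real m * (2 * (12 * eta * real t)\<^sup>2 * sqrt m * eps_a ^ 3))) = 864 * W"
    unfolding W_def by (simp add: power_mult_distrib)
  moreover have "864 * W \<le> 41472 * W * X"
  proof -
    have "0 \<le> W"
      unfolding W_def using assms by simp
    then have "864 * W \<le> 41472 * W * (1 / 8)"
      by simp
    also have "\<dots> \<le> 41472 * W * X"
      using X \<open>0 \<le> W\<close> by (intro mult_left_mono) auto
    finally show ?thesis .
  qed
  ultimately show ?thesis
    by simp
qed

theorem lemma5:
  fixes d m Q i t :: nat and eps_a eta c1 c4 :: real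
    and xs :: "nat \<Rightarrow> nat \<Rightarrow> real" and x :: "nat \<Rightarrow> real"
  assumes "d \<ge> 1" and "m \<ge> 2" and "eps_a > 0" and "Q \<ge> 1" and "eta > 0"
    and "c1 > 10" and "c4 \<ge> 1"
    and "\<And>s. (\<Sum>k=1..d. (xs s k)\<^sup>2) \<le> 1"
    and "i \<in> {1..d}"
    and "(\<Sum>k=1..d. (x k)\<^sup>2) \<le> 1"
    and "t \<ge> 1"
  shows
    "let Lam = 6 * c1 * eps_a * sqrt (2 * ln (real m));
         delta = 192 * eta\<^sup>2 * real m powr (3/2) * Lam\<^sup>2 * c1 * c4 * eps_a * (real t)\<^sup>2
                   * sqrt (ln (real m)) / sqrt pi
     in measure (init_measure d m eps_a)
          {\<omega> \<in> space (init_measure d m eps_a).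
             \<bar>Lapprox Q (Net m \<omega> (sgd m Q eta \<omega> xs t) i) i x
              - Lapprox Q (Pseudo m \<omega> (sgd m Q eta \<omega> xs t) i) i x\<bar> \<le> 3 * delta}
        \<ge> 1 - 1 / c1
            - exp (- (32 * (c4 - 1)\<^sup>2 * eta\<^sup>2 * (real m)\<^sup>2 * Lam\<^sup>2 * (real t)\<^sup>2) / pi)"
proof -
  define Lam where "Lam = 6 * c1 * eps_a * sqrt (2 * ln (real m))"
  define delta where "delta = 192 * eta\<^sup>2 * real m powr (3/2) * Lam\<^sup>2 * c1 * c4 * eps_a * (real t)\<^sup>2
                   * sqrt (ln (real m)) / sqrt pi"
  define B where "B = 3 * (real m * (2 * (12 * eta * real t)\<^sup>2 * sqrt m * eps_a ^ 3))"
  have "0 < Lam"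
    unfolding Lam_def using assms(2,3,6) by simp
  then have "0 < delta"
    unfolding delta_def using assms(2,3,5-7,11) by simp
  moreover have "c1 * B \<le> 3 * delta"
    unfolding B_def delta_def Lam_def using assms(2,3,5-7) by (intro mean_bound_le_delta) auto
  ultimately have "B / (3 * delta) \<le> 1 / c1"
    using assms(6) by (simp add: field_simps)
  moreover have "1 - B / (3 * delta) \<le> measure (init_measure d m eps_a)
      {\<omega> \<in> space (init_measure d m eps_a).
         \<bar>Lapprox Q (Net m \<omega> (sgd m Q eta \<omega> xs t) i) i x
          - Lapprox Q (Pseudo m \<omega> (sgd m Q eta \<omega> xs t) i) i x\<bar> \<le> 3 * delta}"
    unfolding B_def using assms \<open>0 < delta\<close>
    by (intro prob_abs_Lapprox_Net_Pseudo_sgd_le) (auto simp: sqnorm_def)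
  ultimately show ?thesis
    unfolding Let_def Lam_def[symmetric] delta_def[symmetric]
    using exp_gt_zero[of "- (32 * (c4 - 1)\<^sup>2 * eta\<^sup>2 * (real m)\<^sup>2 * Lam\<^sup>2 * (real t)\<^sup>2) / pi"]
    by linarith
qed

end
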